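(* Assume the reduced model family $(V_k)_{k=1,\dots,K}$ is $\sigma$-admissible for some $\sigma>0$. Let $u^*(w)$ be the estimator obtained by surrogate model selection. Then $$E_{wc}:=\sup_{u\in\mathcal M}\|u-u^*(P_Wu)\|\le \delta_{\kappa\sigma},\qquad \kappa=R/r.$$ In particular, for the idealized selection in which $k^*(w)$ minimizes $\operatorname{dist}(u_k^*(w),\mathcal M)$ over $k$ (i.e. $\mathcal S=\operatorname{dist}$, $r=R=1$), one has $E_{wc}\le\delta_\sigma$.
   Context: Let $V$ be a real Hilbert space with norm $\|\cdot\|$. Let $Y\subset\mathbb R^d$ be compact and let $y\mapsto u(y)$ be a continuous map from $Y$ to $V$. Set $\mathcal M=\{u(y):y\in Y\}$, which is compact. Let $W\subset V$ be a linear subspace of finite dimension $m$, let $P_W$ be the orthogonal projection onto $W$, and let $W^\perp$ be its orthogonal complement. For $w\in W$ put $V_w=w+W^\perp$. For $\sigma\ge 0$ define - $\mathcal M_\sigma=\{v\in V:\operatorname{dist}(v,\mathcal M)\le\sigma\}$; - $\delta_\sigma=\sup\{\|u-v\|: u,v\in\mathcal M_\sigma,\ u-v\in W^\perp\}$. For a finite-dimensional subspace $E\subset V$ let $\mu(E,W)=\sup_{v\in E\setminus\{0\}}\|v\|/\|P_Wv\|$, with the conventions $\mu(\{0\},W)=1$ and $\mu(E,W)=+\infty$ if $E\cap W^\perp\ne\{0\}$. A reduced model family consists of: - sets $\mathcal M_1,\dots,\mathcal M_K$ with $\mathcal M=\bigcup_{k=1}^K\mathcal M_k$; - affine spaces $V_k=\bar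 u_k+\bar V_k$, where $\bar u_k\in V$ and $\bar V_k$ is a linear subspace of dimension $n_k\le m$; - numbers $\varepsilon_k\ge\sup_{u\in\mathcal M_k}\operatorname{dist}(u,V_k)$; - constants $\mu_k=\mu(\bar V_k,W)<\infty$. The family is $\sigma$-admissible if $\mu_k\varepsilon_k\le\sigma$ for all $k$. It is $(\varepsilon,\mu)$-admissible if $\varepsilon_k\le\varepsilon$ and $\mu_k\le\mu$ for all $k$. For $w\in W$ the PBDW estimators are $u_k^*(w)=\operatorname{argmin}\{\operatorname{dist}(v,V_k): v\in V_w\}$, $k=1,\dots,K$ (the minimizer is unique). A surrogate is a function $\mathcal S(\cdot,\mathcal M):V\to[0,\infty)$ with $r\operatorname{dist}(v,\mathcal M)\le\mathcal S(v,\mathcal M)\le R\operatorname{dist}(v,\mathcal M)$ for all $v\in V$, where $0<r\le R$ are constants; set $\kappa=R/r$. Surrogate model selection picks $k^*(w)$ as any minimizer of $k\mapsto\mathcal S(u_k^*(w),\mathcal M)$ over $\{1,\dots,K\}$ and sets $u^*(w)=u^*_{k^*(w)}(w)$. *)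

theory Defs
  imports "HOL-Analysis.Analysis"
begin

definition subspace_of_dim :: "'v::real_vector set \<Rightarrow> nat \<Rightarrow> bool" where
  "subspace_of_dim E n \<longleftrightarrow> subspace E \<and>
     (\<exists>B. finite B \<and> independent B \<and> span B = E \<and> card B = n)"

definition projW :: "'v::real_inner set \<Rightarrow> 'v \<Rightarrow> 'v" where
  "projW W v = (THE p. p \<in> W \<and> v - p \<in> orthogonal_comp W)"

definition Vw :: "'v::real_inner set \<Rightarrow> 'v \<Rightarrow> 'v set" where
  "Vw W w = (\<lambda>z. w + z) ` orthogonal_comp W"

definition Msig :: "'v::real_inner set \<Rightarrow> real \<Rightarrow> 'v set" where
  "Msig M \<sigma> = {v. infdist v M \<le> \<sigma>}"

definition delta :: "'v::real_inner set \<Rightarrow> 'v set \<Rightarrow> real \<Rightarrow> ereal" where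
  "delta M W \<sigma> = Sup {ereal (norm (u - v)) | u v.
      u \<in> Msig M \<sigma> \<and> v \<in> Msig M \<sigma> \<and> u - v \<in> orthogonal_comp W}"

definition mu :: "'v::real_inner set \<Rightarrow> 'v set \<Rightarrow> ereal" where
  "mu E W = (if E \<inter> orthogonal_comp W \<noteq> {0} then \<infinity>
             else if E = {0} then 1
             else (SUP v\<in>E - {0}. ereal (norm v / norm (projW W v))))"

definition pbdw :: "'v::real_inner set \<Rightarrow> 'v set \<Rightarrow> 'v \<Rightarrow> 'v" where
  "pbdw W Vk w = (THE v. is_arg_min (\<lambda>v. infdist v Vk) (\<lambda>v. v \<in> Vw W w) v)"

end

theory Submission
  imports Defs
begin

text \<open>
  For x \<in> M_k and w = P_W x the PBDW estimate is explicit: with c = w - P_W ubar_k and e \<in> Vbar_k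
  such that P_W e is the best approximation of c in P_W Vbar_k, one has
  u_k*(w) = ubar_k + e + (c - P_W e). Splitting the error into two W^perp-components and using
  \<parallel>h\<parallel> \<le> \<mu>_k \<parallel>P_W h\<parallel> on Vbar_k gives \<parallel>x - u_k*(w)\<parallel> \<le> \<mu>_k dist(x, V_k) \<le> \<mu>_k \<epsilon>_k \<le> \<sigma>, so
  dist(u_k*(w), M) \<le> \<sigma>. For the selected index the surrogate bounds give
  r dist(u*(w), M) \<le> S(u*(w)) \<le> S(u_k*(w)) \<le> R \<sigma>. Hence x and u*(w) both lie in M_(\<kappa>\<sigma>)
  and differ by an element of W^perp, so \<parallel>x - u*(w)\<parallel> \<le> \<delta>_(\<kappa>\<sigma>).
\<close>

lemma orthogonal_comp_iff: "x \<in> orthogonal_comp W \<longleftrightarrow> (\<forall>y\<in>W. orthogonal y x)"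
  by (simp add: orthogonal_comp_def)

text \<open>
  HOL-Analysis provides orthogonal decompositions only for \<open>euclidean_space\<close>; here the ambient
  space is an arbitrary real inner product space, so we run one Gram--Schmidt step per generator.
\<close>

lemma orthogonal_decomp_finite_span:
  fixes T :: "'a::real_inner set"
  assumes "finite T"
  shows "\<exists>p\<in>span T. \<forall>y\<in>span T. orthogonal y (v - p)"
  using assms
proof (induction arbitrary: v)
  case empty
  show ?case by (simp add: orthogonal_clauses)
next
  case (insert a T)
  obtain pa where pa: "pa \<in> span T" "\<forall>y\<in>span T. orthogonal y (a - pa)"
    using insert.IH by blast
  obtain p where p: "p \<in> span T" "\<forall>y\<in>span T. orthogonal y (v - p)"
    using insert.IH by blast
  define a' where "a' = a - pa"
  define p' where "p' = p + ((a' \<bullet> (v - p)) / (a' \<bullet> a')) *\<^sub>R a'"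
  have "orthogonal y (v - p')" if "y \<in> insert a T" for y
  proof -
    have "orthogonal y' (v - p')" if "y' \<in> span T" for y'
      using pa(2) p(2) that unfolding p'_def a'_def
      by (simp add: orthogonal_def inner_diff_right inner_add_right)
    moreover have "orthogonal a' (v - p')"
    proof -
      have "a' \<bullet> p = 0"
        using pa(2) p(1) unfolding a'_def orthogonal_def by (simp add: inner_commute)
      then show ?thesis
        unfolding p'_def orthogonal_def by (cases "a' = 0") (simp_all add: inner_diff_right inner_add_right)
    qed
    ultimately show ?thesis
      using that pa(1) span_base[of _ T] unfolding a'_def orthogonal_def
      by (auto simp: inner_diff_left)
  qed
  moreover have "p' \<in> span (insert a T)"
    using p(1) pa(1) unfolding p'_def a'_def
    by (meson span_add span_diff span_base insertI1 span_mono span_mul subset_insertI subsetD)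
  ultimately show ?case
    by (metis orthogonal_commute orthogonal_to_span)
qed

lemma add_le_mult_of_sum_squares:
  fixes a b g d \<mu> :: real
  assumes "a\<^sup>2 + b\<^sup>2 = d\<^sup>2" and "g\<^sup>2 \<le> (\<mu>\<^sup>2 - 1) * b\<^sup>2"
    and "0 \<le> a" "0 \<le> g" "0 \<le> d" "1 \<le> \<mu>"
  shows "a + g \<le> \<mu> * d"
proof -
  define t where "t = \<mu>\<^sup>2 - 1"
  have "0 \<le> t"
    unfolding t_def using \<open>1 \<le> \<mu>\<close> by (simp add: one_le_power)
  have "(2 * a * g)\<^sup>2 \<le> 4 * a\<^sup>2 * (t * b\<^sup>2)"
    using assms(2) unfolding t_def by (simp add: power_mult_distrib mult_left_mono)
  also have "\<dots> \<le> (t * a\<^sup>2 + b\<^sup>2)\<^sup>2"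
    using zero_le_power2[of "t * a\<^sup>2 - b\<^sup>2"] by (simp add: power2_eq_square algebra_simps)
  finally have "2 * a * g \<le> t * a\<^sup>2 + b\<^sup>2"
    by (rule power2_le_imp_le) (use \<open>0 \<le> t\<close> in simp)
  moreover have "(a + g)\<^sup>2 = a\<^sup>2 + 2 * a * g + g\<^sup>2"
    by (simp add: power2_sum)
  moreover have "(\<mu> * d)\<^sup>2 = \<mu>\<^sup>2 * a\<^sup>2 + \<mu>\<^sup>2 * b\<^sup>2"
    by (simp add: power_mult_distrib distrib_left flip: assms(1))
  moreover have "t * a\<^sup>2 = \<mu>\<^sup>2 * a\<^sup>2 - a\<^sup>2" "t * b\<^sup>2 = \<mu>\<^sup>2 * b\<^sup>2 - b\<^sup>2"
    unfolding t_def by (simp_all add: left_diff_distrib)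
  ultimately have "(a + g)\<^sup>2 \<le> (\<mu> * d)\<^sup>2"
    using assms(2) unfolding t_def[symmetric] by linarith
  then show ?thesis
    by (rule power2_le_imp_le) (use assms(5,6) in simp)
qed

lemma norm_le_delta:
  assumes "x \<in> M" and "x - v \<in> orthogonal_comp W" and "infdist v M \<le> s"
  shows "ereal (norm (x - v)) \<le> delta M W s"
proof -
  have "x \<in> Msig M s" and "v \<in> Msig M s"
    using assms infdist_nonneg[of v M] unfolding Msig_def by auto
  then show ?thesis
    unfolding delta_def using assms(2) by (intro Sup_upper) blast
qed

locale finite_dim_subspace =
  fixes W :: "'a::real_inner set"
  assumes finite_spanning_set: "\<exists>B. finite B \<and> span B = W"
begin

lemma subspace: "subspace W"
  using finite_spanning_set by auto

lemma projW_ex1: "\<exists>!p. p \<in> W \<and> v - p \<in> orthogonal_comp W"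
proof -
  obtain p where p: "p \<in> W" "v - p \<in> orthogonal_comp W"
    using finite_spanning_set orthogonal_decomp_finite_span[of _ v]
    by (auto simp: orthogonal_comp_iff)
  moreover have "q = p" if "q \<in> W" "v - q \<in> orthogonal_comp W" for q
  proof -
    have "p - q \<in> W"
      using p(1) that(1) subspace by (simp add: subspace_diff)
    moreover have "p - q = (v - q) - (v - p)" by simp
    then have "p - q \<in> orthogonal_comp W"
      using p(2) that(2) by (metis subspace_diff subspace_orthogonal_comp)
    ultimately show ?thesis
      by (metis orthogonal_comp_iff orthogonal_self right_minus_eq)
  qed
  ultimately show ?thesis by blast
qed

lemma projW_in: "projW W v \<in> W"
  and projW_orth: "v - projW W v \<in> orthogonal_comp W"
  using theI'[OF projW_ex1[of v]] unfolding projW_def by auto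

lemma projW_unique: "p \<in> W \<Longrightarrow> v - p \<in> orthogonal_comp W \<Longrightarrow> projW W v = p"
  using projW_ex1[of v] projW_in projW_orth by blast

lemma linear_projW: "linear (projW W)"
proof
  fix x y
  have "x + y - (projW W x + projW W y) = (x - projW W x) + (y - projW W y)"
    by simp
  then show "projW W (x + y) = projW W x + projW W y"
    using projW_in projW_orth subspace
    by (metis projW_unique subspace_add subspace_orthogonal_comp)
next
  fix c :: real and x
  show "projW W (c *\<^sub>R x) = c *\<^sub>R projW W x"
    using projW_in projW_orth subspace
    by (intro projW_unique)
       (auto simp: subspace_scale scaleR_diff_right[symmetric] intro: subspace_scale[OF subspace_orthogonal_comp])
qed

lemma projW_id: "w \<in> W \<Longrightarrow> projW W w = w"
  by (rule projW_unique) (auto simp: orthogonal_comp_iff orthogonal_clauses)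

lemma projW_orthogonal_comp: "q \<in> orthogonal_comp W \<Longrightarrow> projW W q = 0"
  by (rule projW_unique) (auto simp: subspace subspace_0)

lemma norm_diff_pythagorean:
  assumes "y \<in> W"
  shows "(norm (v - y))\<^sup>2 = (norm (v - projW W v))\<^sup>2 + (norm (projW W v - y))\<^sup>2"
proof -
  have "projW W v - y \<in> W"
    using assms projW_in subspace by (simp add: subspace_diff)
  then have "orthogonal (v - projW W v) (projW W v - y)"
    using projW_orth[of v] unfolding orthogonal_comp_iff by (metis orthogonal_commute)
  from norm_add_Pythagorean[OF this] show ?thesis by simp
qed

lemma norm_pythagorean: "(norm v)\<^sup>2 = (norm (projW W v))\<^sup>2 + (norm (v - projW W v))\<^sup>2"
  using norm_diff_pythagorean[OF subspace_0[OF subspace], of v] by (simp add: add.commute)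

lemma norm_projW_le: "norm (projW W v) \<le> norm v"
  by (rule power2_le_imp_le) (use norm_pythagorean[of v] in simp_all)

lemma infdist_translate_eq: "infdist v ((+) a ` W) = norm ((v - a) - projW W (v - a))"
proof (rule antisym)
  have "a + projW W (v - a) \<in> (+) a ` W"
    using projW_in by blast
  from infdist_le[OF this, of v] show "infdist v ((+) a ` W) \<le> norm ((v - a) - projW W (v - a))"
    by (simp add: dist_norm algebra_simps)
next
  have "norm ((v - a) - projW W (v - a)) \<le> dist v (a + y)" if "y \<in> W" for y
    unfolding dist_norm diff_diff_eq[symmetric]
    by (rule power2_le_imp_le) (use norm_diff_pythagorean[OF that, of "v - a"] in simp_all)
  moreover have "(+) a ` W \<noteq> {}"
    using subspace_0[OF subspace] by blast
  ultimately show "norm ((v - a) - projW W (v - a)) \<le> infdist v ((+) a ` W)"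
    unfolding infdist_notempty[OF \<open>(+) a ` W \<noteq> {}\<close>] by (auto intro!: cINF_greatest)
qed

lemma finite_dim_subspace_linear_image:
  assumes "linear f"
  shows "finite_dim_subspace (f ` W)"
  using finite_spanning_set span_linear_image[OF assms]
  by (metis finite_dim_subspace.intro finite_imageI)

lemma Vw_iff: "w \<in> W \<Longrightarrow> v \<in> Vw W w \<longleftrightarrow> projW W v = w"
proof
  assume "v \<in> Vw W w" and "w \<in> W"
  then obtain z where "z \<in> orthogonal_comp W" "v = w + z"
    unfolding Vw_def by blast
  then show "projW W v = w"
    using \<open>w \<in> W\<close> by (simp add: linear_add[OF linear_projW] projW_id projW_orthogonal_comp)
next
  assume "projW W v = w"
  then show "v \<in> Vw W w"
    unfolding Vw_def using projW_orth[of v] by (force intro: image_eqI[of _ _ "v - w"])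
qed

lemma mu_finite_bound:
  assumes "subspace E" and "mu E W < \<infinity>"
  obtains \<mu> where "mu E W = ereal \<mu>" "1 \<le> \<mu>" "\<forall>h\<in>E. norm h \<le> \<mu> * norm (projW W h)"
proof -
  have E_orth: "E \<inter> orthogonal_comp W = {0}"
  proof (rule ccontr)
    assume "E \<inter> orthogonal_comp W \<noteq> {0}"
    then have "mu E W = \<infinity>"
      by (simp add: mu_def)
    with assms(2) show False
      by simp
  qed
  have P_nonzero: "projW W h \<noteq> 0" if "h \<in> E" "h \<noteq> 0" for h
  proof
    assume "projW W h = 0"
    then have "h \<in> orthogonal_comp W"
      using projW_orth[of h] by simp
    with E_orth that show False
      by blast
  qed
  show thesis
  proof (cases "E = {0}")
    case True
    then show ?thesis
      using E_orth that[of 1] unfolding mu_def by (auto simp: linear_0[OF linear_projW])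
  next
    case False
    define ratio where "ratio h = ereal (norm h / norm (projW W h))" for h
    have mu_eq: "mu E W = (SUP h\<in>E - {0}. ratio h)"
      unfolding mu_def ratio_def using E_orth False by auto
    obtain h0 where h0: "h0 \<in> E - {0}"
      using False subspace_0[OF assms(1)] by blast
    have "ereal 1 \<le> ratio h0"
      unfolding ratio_def using h0 P_nonzero[of h0] norm_projW_le[of h0] by simp
    also have "\<dots> \<le> mu E W"
      unfolding mu_eq using h0 by (rule SUP_upper)
    finally obtain \<mu> where \<mu>: "mu E W = ereal \<mu>" "1 \<le> \<mu>"
      using assms(2) by (cases "mu E W") auto
    have "norm h \<le> \<mu> * norm (projW W h)" if "h \<in> E" for h
    proof (cases "h = 0")
      case False
      have "ratio h \<le> mu E W"
        unfolding mu_eq using that False by (intro SUP_upper) auto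
      then show ?thesis
        using \<mu>(1) P_nonzero[OF that False] by (simp add: ratio_def pos_divide_le_eq)
    qed (simp add: linear_0[OF linear_projW])
    then show ?thesis
      using that \<mu> by blast
  qed
qed

lemma norm_diff_affine_pythagorean:
  fixes a v w e :: 'a
  assumes E: "finite_dim_subspace E" and v: "projW W v = w" and e: "e \<in> E"
  defines "c \<equiv> w - projW W a" and "Q \<equiv> projW (projW W ` E)"
  shows "(norm (v - (a + e)))\<^sup>2 = (norm (c - Q c))\<^sup>2 + (norm (Q c - projW W e))\<^sup>2
           + (norm ((v - (a + e)) - projW W (v - (a + e))))\<^sup>2"
proof -
  interpret PE: finite_dim_subspace "projW W ` E"
    using finite_dim_subspace.finite_dim_subspace_linear_image[OF E linear_projW] .
  have "projW W (v - (a + e)) = c - projW W e"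
    using v unfolding c_def by (simp add: linear_diff[OF linear_projW] linear_add[OF linear_projW])
  moreover have "(norm (c - projW W e))\<^sup>2 = (norm (c - Q c))\<^sup>2 + (norm (Q c - projW W e))\<^sup>2"
    unfolding Q_def using e by (intro PE.norm_diff_pythagorean) blast
  ultimately show ?thesis
    using norm_pythagorean[of "v - (a + e)"] by simp
qed

text \<open>
  For v \<in> V_w and c = w - P_W a, the squared distance from v to a + E splits into
  \<parallel>c - P_W e'\<parallel>^2 \<ge> dist(c, P_W E)^2 and a W^perp-part; both bounds are attained only at the
  point below.
\<close>

lemma pbdw_eq:
  assumes E: "finite_dim_subspace E" and inj: "\<And>h. h \<in> E \<Longrightarrow> projW W h = 0 \<Longrightarrow> h = 0"
    and w: "w \<in> W" and e: "e \<in> E" "projW W e = projW (projW W ` E) (w - projW W a)"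
  shows "pbdw W ((+) a ` E) w = a + e + (w - projW W a - projW W e)"
proof -
  interpret E: finite_dim_subspace E by (rule E)
  let ?P = "projW W" and ?V = "(+) a ` E"
  define c where "c = w - ?P a"
  define us where "us = a + e + (c - ?P e)"
  define m where "m = norm (c - ?P e)"
  have split: "(norm (v - (a + e')))\<^sup>2 = m\<^sup>2 + (norm (?P e - ?P e'))\<^sup>2
           + (norm ((v - (a + e')) - ?P (v - (a + e'))))\<^sup>2" if "?P v = w" "e' \<in> E" for v e'
    using norm_diff_affine_pythagorean[OF E that] e(2) unfolding m_def c_def by simp
  have infdist_eq: "infdist v ?V = norm (v - (a + projW E (v - a)))" for v
    by (simp add: E.infdist_translate_eq diff_diff_eq)
  have Pc: "?P (c - ?P e) = c - ?P e"
    unfolding c_def using w projW_in subspace by (simp add: projW_id subspace_diff)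
  have us_Vw: "us \<in> Vw W w"
    using Pc w unfolding Vw_iff[OF w] us_def c_def
    by (simp add: linear_add[OF linear_projW] linear_diff[OF linear_projW])
  have us_le: "infdist us ?V \<le> m"
    using infdist_le[of "a + e" ?V us] e(1) unfolding us_def m_def by (simp add: dist_norm)
  have lower: "m \<le> infdist v ?V" if "v \<in> Vw W w" for v
    unfolding infdist_eq
    by (rule power2_le_imp_le)
       (use split[of v "projW E (v - a)"] E.projW_in that Vw_iff[OF w] in simp_all)
  have unique: "v = us" if "v \<in> Vw W w" "infdist v ?V \<le> m" for v
  proof -
    define e' where "e' = projW E (v - a)"
    have Pv: "?P v = w"
      using that(1) Vw_iff[OF w] by blast
    have "(norm (v - (a + e')))\<^sup>2 \<le> m\<^sup>2"
      using that(2) infdist_eq[of v] infdist_nonneg unfolding e'_def by (simp add: power_mono)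
    with split[OF Pv E.projW_in]
    have "(norm (?P e - ?P e'))\<^sup>2 + (norm ((v - (a + e')) - ?P (v - (a + e'))))\<^sup>2 \<le> 0"
      unfolding e'_def by simp
    then have "?P e = ?P e'" and v_eq: "v - (a + e') = ?P (v - (a + e'))"
      unfolding sum_power2_le_zero_iff by simp_all
    then have "e' = e"
      using inj[of "e' - e"] e(1) E.projW_in E.subspace unfolding e'_def
      by (simp add: subspace_diff linear_diff[OF linear_projW])
    then show ?thesis
      using v_eq Pv unfolding us_def c_def
      by (simp add: linear_diff[OF linear_projW] linear_add[OF linear_projW] algebra_simps)
  qed
  have "pbdw W ?V w = us"
    unfolding pbdw_def
  proof (rule the_equality)
    show "is_arg_min (\<lambda>v. infdist v ?V) (\<lambda>v. v \<in> Vw W w) us"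
      unfolding is_arg_min_def using us_Vw us_le lower by (meson not_less order_trans)
  next
    fix v
    assume "is_arg_min (\<lambda>v. infdist v ?V) (\<lambda>v. v \<in> Vw W w) v"
    then have "v \<in> Vw W w" and "infdist v ?V \<le> infdist us ?V"
      unfolding is_arg_min_def using us_Vw by (auto simp: not_less)
    then show "v = us"
      using unique us_le by simp
  qed
  then show ?thesis
    unfolding us_def c_def .
qed

text \<open>
  Bounding the two residuals separately would give the constant 1 + \<mu>; balancing them by
  Cauchy--Schwarz gives \<mu>.
\<close>

lemma norm_residual_sum_le:
  assumes "norm h \<le> \<mu> * norm (projW W h)" and "(norm (projW W h))\<^sup>2 \<le> (norm (projW W r))\<^sup>2"
    and "1 \<le> \<mu>"
  shows "norm ((r - projW W r) + (h - projW W h)) \<le> \<mu> * norm r"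
proof -
  have "(norm h)\<^sup>2 \<le> (\<mu> * norm (projW W h))\<^sup>2"
    using assms(1) by (simp add: power_mono)
  then have "(norm (h - projW W h))\<^sup>2 \<le> (\<mu>\<^sup>2 - 1) * (norm (projW W h))\<^sup>2"
    using norm_pythagorean[of h] by (simp add: power_mult_distrib algebra_simps)
  also have "\<dots> \<le> (\<mu>\<^sup>2 - 1) * (norm (projW W r))\<^sup>2"
    using assms(2,3) by (simp add: mult_left_mono one_le_power)
  finally have "norm (r - projW W r) + norm (h - projW W h) \<le> \<mu> * norm r"
    using norm_pythagorean[of r] assms(3) by (intro add_le_mult_of_sum_squares) simp_all
  then show ?thesis
    using norm_triangle_ineq order_trans by blast
qed

text \<open>
  With the best approximation a + e0 of x in a + E, r = x - (a + e0) and h = e0 - e, the error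
  is (r - P_W r) + (h - P_W h), and \<parallel>P_W h\<parallel> \<le> \<parallel>P_W r\<parallel> because P_W e is the best approximation
  of c in P_W E.
\<close>

lemma pbdw_error:
  assumes E: "finite_dim_subspace E" and mu_fin: "mu E W < \<infinity>"
  shows "x - pbdw W ((+) a ` E) (projW W x) \<in> orthogonal_comp W"
    and "ereal (norm (x - pbdw W ((+) a ` E) (projW W x)))
           \<le> mu E W * ereal (infdist x ((+) a ` E))"
proof -
  interpret E: finite_dim_subspace E by (rule E)
  interpret PE: finite_dim_subspace "projW W ` E"
    using E.finite_dim_subspace_linear_image[OF linear_projW] .
  let ?P = "projW W"
  note P_lin = linear_diff[OF linear_projW] linear_add[OF linear_projW]
  obtain \<mu> where \<mu>: "mu E W = ereal \<mu>" "1 \<le> \<mu>" and bound: "\<forall>h\<in>E. norm h \<le> \<mu> * norm (?P h)"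
    using mu_finite_bound[OF E.subspace mu_fin] .
  define c where "c = ?P x - ?P a"
  obtain e where e: "e \<in> E" "?P e = projW (?P ` E) c"
    using PE.projW_in[of c] by (metis imageE)
  define us where "us = a + e + (c - ?P e)"
  have inj: "h = 0" if "h \<in> E" "?P h = 0" for h
    using bound that by (metis mult_zero_right norm_le_zero_iff norm_zero)
  have us: "pbdw W ((+) a ` E) (?P x) = us"
    unfolding us_def c_def by (rule pbdw_eq[OF E inj projW_in e(1) e(2)[unfolded c_def]])
  have "?P (x - us) = 0"
    unfolding us_def c_def by (simp add: P_lin projW_id projW_in)
  then show "x - pbdw W ((+) a ` E) (?P x) \<in> orthogonal_comp W"
    using projW_orth[of "x - us"] us by simp
  define e0 where "e0 = projW E (x - a)"
  define r where "r = x - (a + e0)"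
  define h where "h = e0 - e"
  have h: "h \<in> E"
    unfolding h_def e0_def using E.projW_in e(1) E.subspace by (simp add: subspace_diff)
  have dist_r: "infdist x ((+) a ` E) = norm r"
    unfolding r_def e0_def by (simp add: E.infdist_translate_eq diff_diff_eq)
  have Pr: "?P r = ?P x - ?P a - ?P e0"
    unfolding r_def by (simp add: P_lin diff_diff_eq)
  have Ph: "?P h = ?P e0 - ?P e"
    unfolding h_def by (rule P_lin(1))
  have decomp: "x - us = (r - ?P r) + (h - ?P h)"
    unfolding Pr Ph unfolding us_def r_def h_def c_def by (simp add: algebra_simps)
  have "(norm (?P r))\<^sup>2 = (norm (c - projW (?P ` E) c))\<^sup>2 + (norm (projW (?P ` E) c - ?P e0))\<^sup>2"
    unfolding Pr c_def[symmetric] using E.projW_in unfolding e0_def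
    by (intro PE.norm_diff_pythagorean) blast
  moreover have "norm (?P h) = norm (projW (?P ` E) c - ?P e0)"
    unfolding Ph e(2) by (rule norm_minus_commute)
  ultimately have Ph_le: "(norm (?P h))\<^sup>2 \<le> (norm (?P r))\<^sup>2"
    by simp
  have "norm (x - us) \<le> \<mu> * norm r"
    unfolding decomp using bound h Ph_le \<mu>(2) by (intro norm_residual_sum_le) auto
  then have "norm (x - us) \<le> \<mu> * infdist x ((+) a ` E)"
    using dist_r by simp
  then show "ereal (norm (x - pbdw W ((+) a ` E) (?P x))) \<le> mu E W * ereal (infdist x ((+) a ` E))"
    using us \<mu>(1) by simp
qed

lemma pbdw_infdist_le:
  assumes E: "finite_dim_subspace E" and mu_fin: "mu E W < \<infinity>"
    and admissible: "mu E W * ereal \<epsilon> \<le> ereal \<sigma>"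
    and x: "x \<in> M" and close: "infdist x ((+) a ` E) \<le> \<epsilon>"
  shows "infdist (pbdw W ((+) a ` E) (projW W x)) M \<le> \<sigma>"
proof -
  obtain \<mu> where \<mu>: "mu E W = ereal \<mu>" "1 \<le> \<mu>"
    using mu_finite_bound[OF finite_dim_subspace.subspace[OF E] mu_fin] by blast
  have "ereal (infdist (pbdw W ((+) a ` E) (projW W x)) M)
          \<le> ereal (norm (x - pbdw W ((+) a ` E) (projW W x)))"
    using infdist_le[OF x, of "pbdw W ((+) a ` E) (projW W x)"]
    by (simp add: dist_norm norm_minus_commute[of _ x])
  also have "\<dots> \<le> mu E W * ereal (infdist x ((+) a ` E))"
    by (rule pbdw_error(2)[OF E mu_fin])
  also have "\<dots> \<le> mu E W * ereal \<epsilon>"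
    using close \<mu> by (intro ereal_mult_left_mono) simp_all
  also note admissible
  finally show ?thesis
    by simp
qed

lemma surrogate_selection_error:
  fixes M :: "'a set" and Mk :: "'i \<Rightarrow> 'a set" and Vbar :: "'i \<Rightarrow> 'a set"
  assumes cover: "(\<Union>k\<in>I. Mk k) = M"
    and models: "\<And>k. k \<in> I \<Longrightarrow> finite_dim_subspace (Vbar k) \<and> mu (Vbar k) W < \<infinity>"
    and eps: "\<And>k x. k \<in> I \<Longrightarrow> x \<in> Mk k \<Longrightarrow> infdist x ((+) (ubar k) ` Vbar k) \<le> eps k"
    and admissible: "\<And>k. k \<in> I \<Longrightarrow> mu (Vbar k) W * ereal (eps k) \<le> ereal \<sigma>"
    and rR: "0 < r" "r \<le> R"
    and S: "\<And>v. r * infdist v M \<le> S v \<and> S v \<le> R * infdist v M"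
    and kstar: "\<And>w. w \<in> W \<Longrightarrow> kstar w \<in> I \<and>
       (\<forall>k\<in>I. S (pbdw W ((+) (ubar (kstar w)) ` Vbar (kstar w)) w)
                \<le> S (pbdw W ((+) (ubar k) ` Vbar k) w))"
    and x: "x \<in> M"
  shows "ereal (norm (x - pbdw W ((+) (ubar (kstar (projW W x))) ` Vbar (kstar (projW W x)))
                               (projW W x)))
           \<le> delta M W (R / r * \<sigma>)"
proof -
  define u where "u k = pbdw W ((+) (ubar k) ` Vbar k) (projW W x)" for k
  obtain k0 where k0: "k0 \<in> I" "x \<in> Mk k0"
    using x cover by blast
  have ks: "kstar (projW W x) \<in> I"
    using kstar[OF projW_in] by blast
  have "r * infdist (u (kstar (projW W x))) M \<le> S (u (kstar (projW W x)))"
    using S by blast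
  also have "\<dots> \<le> S (u k0)"
    unfolding u_def using kstar[OF projW_in] k0(1) by blast
  also have "\<dots> \<le> R * infdist (u k0) M"
    using S by blast
  also have "\<dots> \<le> R * \<sigma>"
    unfolding u_def using models[OF k0(1)] admissible[OF k0(1)] x eps[OF k0] rR
    by (intro mult_left_mono pbdw_infdist_le) auto
  finally have "infdist (u (kstar (projW W x))) M \<le> R / r * \<sigma>"
    using rR(1) by (simp add: pos_le_divide_eq mult.commute)
  then show ?thesis
    using x pbdw_error(1) models[OF ks] unfolding u_def by (intro norm_le_delta) auto
qed

end

theorem theorem3p2:
  fixes Y :: "'y::euclidean_space set"
    and u :: "'y \<Rightarrow> 'v::{real_inner, complete_space}"
    and W :: "'v set" and m :: nat
    and K :: nat and Mk :: "nat \<Rightarrow> 'v set"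
    and ubar :: "nat \<Rightarrow> 'v" and Vbar :: "nat \<Rightarrow> 'v set" and n :: "nat \<Rightarrow> nat"
    and eps :: "nat \<Rightarrow> real" and \<sigma> :: real
    and S :: "'v \<Rightarrow> real" and r R :: real
    and kstar :: "'v \<Rightarrow> nat" and kstar_id :: "'v \<Rightarrow> nat"
  assumes Y: "compact Y"
    and u: "continuous_on Y u"
    and W: "subspace_of_dim W m"
    and K: "K \<ge> 1"
    and cover: "(\<Union>k\<in>{1..K}. Mk k) = u ` Y"
    and Vbar: "\<And>k. k \<in> {1..K} \<Longrightarrow> subspace_of_dim (Vbar k) (n k) \<and> n k \<le> m"
    and eps: "\<And>k x. k \<in> {1..K} \<Longrightarrow> x \<in> Mk k \<Longrightarrow>
                 infdist x ((\<lambda>z. ubar k + z) ` Vbar k) \<le> eps k"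
    and mu_fin: "\<And>k. k \<in> {1..K} \<Longrightarrow> mu (Vbar k) W < \<infinity>"
    and sig_pos: "\<sigma> > 0"
    and admissible: "\<And>k. k \<in> {1..K} \<Longrightarrow> mu (Vbar k) W * ereal (eps k) \<le> ereal \<sigma>"
    and rR: "0 < r" "r \<le> R"
    and S: "\<And>v. r * infdist v (u ` Y) \<le> S v \<and> S v \<le> R * infdist v (u ` Y)"
    and kstar: "\<And>w. w \<in> W \<Longrightarrow> kstar w \<in> {1..K} \<and>
       (\<forall>k\<in>{1..K}. S (pbdw W ((\<lambda>z. ubar (kstar w) + z) ` Vbar (kstar w)) w)
                   \<le> S (pbdw W ((\<lambda>z. ubar k + z) ` Vbar k) w))"
    and kstar_id: "\<And>w. w \<in> W \<Longrightarrow> kstar_id w \<in> {1..K} \<and>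
       (\<forall>k\<in>{1..K}. infdist (pbdw W ((\<lambda>z. ubar (kstar_id w) + z) ` Vbar (kstar_id w)) w) (u ` Y)
                   \<le> infdist (pbdw W ((\<lambda>z. ubar k + z) ` Vbar k) w) (u ` Y))"
  shows "(SUP x\<in>u ` Y. ereal (norm (x - pbdw W ((\<lambda>z. ubar (kstar (projW W x)) + z)
                      ` Vbar (kstar (projW W x))) (projW W x))))
           \<le> delta (u ` Y) W ((R / r) * \<sigma>)
      \<and> (SUP x\<in>u ` Y. ereal (norm (x - pbdw W ((\<lambda>z. ubar (kstar_id (projW W x)) + z)
                      ` Vbar (kstar_id (projW W x))) (projW W x))))
           \<le> delta (u ` Y) W \<sigma>"
proof -
  obtain B where "finite B" "span B = W"
    using W unfolding subspace_of_dim_def by blast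
  then interpret finite_dim_subspace W
    by unfold_locales blast
  have models: "finite_dim_subspace (Vbar k) \<and> mu (Vbar k) W < \<infinity>" if "k \<in> {1..K}" for k
    using Vbar[OF that] mu_fin[OF that] unfolding subspace_of_dim_def finite_dim_subspace_def
    by blast
  have dist_is_surrogate:
    "1 * infdist v (u ` Y) \<le> infdist v (u ` Y) \<and> infdist v (u ` Y) \<le> 1 * infdist v (u ` Y)" for v
    by simp
  have "ereal (norm (x - pbdw W ((\<lambda>z. ubar (kstar (projW W x)) + z)
                      ` Vbar (kstar (projW W x))) (projW W x))) \<le> delta (u ` Y) W ((R / r) * \<sigma>)"
    if "x \<in> u ` Y" for x
    using cover models eps admissible rR S kstar that by (rule surrogate_selection_error)
  moreover have "ereal (norm (x - pbdw W ((\<lambda>z. ubar (kstar_id (projW W x)) + z)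
                      ` Vbar (kstar_id (projW W x))) (projW W x))) \<le> delta (u ` Y) W (1 / 1 * \<sigma>)"
    if "x \<in> u ` Y" for x
    using cover models eps admissible zero_less_one order_refl dist_is_surrogate kstar_id that
    by (rule surrogate_selection_error)
  ultimately show ?thesis
    by (auto intro!: SUP_least)
qed

end
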